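(* Let $A,B\in\mathbb D[X]$ both have degree $d$ and valuation $0$, with symmetric subresultants $(S_i)_{-1\le i\le d}$. Fix $\ell\in\{1,\dots,\lfloor d/2\rfloor\}$ and let $(\widehat S_j)_{-1\le j\le 2\ell-1}$ be the symmetric subresultants of $A_{|\ell}$ and $B_{|\ell}$ (polynomials of degree $2\ell-1$, truncated with formal degree $d$). Then for every $1\le j<\ell$, $$S_{j|(\ell-j)}=\widehat S_{j|(\ell-j)},$$ where $S_j$ is truncated as a polynomial of formal degree $d-j$ and $\widehat S_j$ as a polynomial of formal degree $2\ell-1-j$. In particular $S_j(0)=\widehat S_j(0)$ and $\mathrm{co}_{d-j}(S_j)=\mathrm{co}_{2\ell-1-j}(\widehat S_j)$ for $1\le j<\ell$.
   Context: $\mathbb D$ is a subring of $\mathbb C$; $v(P)$ is the largest $v$ with $X^v\mid P$; $\mathrm{co}_k(P)$ is the coefficient of $X^k$. Symmetric subresultants: let $A=\sum_{i=0}^n a_iX^i$, $B=\sum_{i=0}^n b_iX^i$ with $\deg A=n\ge1$ ($B$ of formal degree $n$). Put $a_i=b_i=0$ for $i<0$ or $i>n$. For $1\le j\le n$ and $0\le\ell\le n-j$, let $\mathrm{Sylv}_{j,\ell}$ be the $2j\times 2j$ matrix whose $r$-th row, $1\le r\le j$, is $(a_{1-r},\dots,a_{j-1-r},\ a_{j-r+\ell},\ a_{n+1-r},\dots,a_{n+j-r})$ and whose $(j+r)$-th row is the same with $a$ replaced by $b$. The symmetric subresultants are $S_{-1}=A$, $S_0=B$, $S_j=\sum_{\ell=0}^{n-j}\det(\mathrm{Sylv}_{j,\ell})X^\ell$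 ($1\le j\le n$). Symmetric truncation: for $P=\sum_{i=0}^Dp_iX^i$ regarded as of formal degree $D$ and $m\in\{1,\dots,\lfloor D/2\rfloor\}$, $P_{|m}=p_0+\dots+p_{m-1}X^{m-1}+p_{D-m+1}X^m+\dots+p_DX^{2m-1}$; $P_{|0}=0$; $P_{|m}=P$ for $m>\lfloor D/2\rfloor$. *)

theory Defs
  imports "HOL-Computational_Algebra.Polynomial" "Jordan_Normal_Form.Determinant"
begin

definition is_subring_C :: "complex set \<Rightarrow> bool" where
  "is_subring_C D \<longleftrightarrow> 0 \<in> D \<and> 1 \<in> D \<and> (\<forall>x\<in>D. \<forall>y\<in>D. x + y \<in> D \<and> x - y \<in> D \<and> x * y \<in> D)"

definition val :: "'a::comm_semiring_1 poly \<Rightarrow> nat" where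
  "val P = (GREATEST v. [:0, 1:] ^ v dvd P)"

text \<open>Coefficient with integer index, a_i = 0 for i < 0 or i > n (formal degree n).\<close>
definition cf :: "nat \<Rightarrow> 'a::zero poly \<Rightarrow> int \<Rightarrow> 'a" where
  "cf n P i = (if 0 \<le> i \<and> i \<le> int n then coeff P (nat i) else 0)"

text \<open>Row of Sylv_{j,l} built from polynomial P (formal degree n); r, c are 1-based.\<close>
definition sylv_row :: "nat \<Rightarrow> 'a::zero poly \<Rightarrow> nat \<Rightarrow> nat \<Rightarrow> nat \<Rightarrow> nat \<Rightarrow> 'a" where
  "sylv_row n P j l r c =
     (if c < j then cf n P (int c - int r)
      else if c = j then cf n P (int j - int r + int l)
      else cf n P (int n + int (c - j) - int r))"

text \<open>The 2j x 2j matrix Sylv_{j,l} (0-based indices in Isabelle).\<close>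
definition Sylv :: "nat \<Rightarrow> 'a::zero poly \<Rightarrow> 'a poly \<Rightarrow> nat \<Rightarrow> nat \<Rightarrow> 'a mat" where
  "Sylv n A B j l = mat (2*j) (2*j) (\<lambda>(i, k).
     if i < j then sylv_row n A j l (i + 1) (k + 1)
     else sylv_row n B j l (i - j + 1) (k + 1))"

definition sym_subres :: "nat \<Rightarrow> 'a::comm_ring_1 poly \<Rightarrow> 'a poly \<Rightarrow> int \<Rightarrow> 'a poly" where
  "sym_subres n A B j =
     (if j = -1 then A else if j = 0 then B
      else (\<Sum>l = 0..n - nat j. monom (det (Sylv n A B (nat j) l)) l))"

definition sym_trunc :: "nat \<Rightarrow> nat \<Rightarrow> 'a::comm_semiring_1 poly \<Rightarrow> 'a poly" where
  "sym_trunc D m P =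
     (if m = 0 then 0
      else if m > D div 2 then P
      else (\<Sum>i<m. monom (coeff P i) i) + (\<Sum>i<m. monom (coeff P (D - m + 1 + i)) (m + i)))"

end

theory Submission
  imports Defs
begin

text \<open>Apart from its middle column, every entry of \<open>Sylv\<^sub>j\<^sub>,\<^sub>k\<close> is a coefficient of A or B
whose index lies within distance j of 0 or of the formal degree, and the middle column holds the
coefficients with indices \<open>k, \<dots>, k + j - 1\<close>. The truncation \<open>P\<^sub>|\<^sub>l\<close> keeps the l lowest and the
l highest coefficients of P, at the same distances from 0 and from the new formal degree
\<open>2l - 1\<close>. Hence for \<open>j < l\<close> and for k among the \<open>l - j\<close> lowest or highest indices, the matrices
\<open>Sylv\<^sub>j\<^sub>,\<^sub>k\<close> built from A, B and from their truncations coincide entrywise, and so do the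
corresponding coefficients of the subresultants.\<close>

lemma coeff_sym_trunc:
  assumes "0 < m" "m \<le> D div 2"
  shows "coeff (sym_trunc D m P) k =
    (if k < m then coeff P k else if k < 2*m then coeff P (D - m + 1 + (k - m)) else 0)"
proof -
  have high: "coeff (\<Sum>i<m. monom (coeff P (D - m + 1 + i)) (m + i)) k
      = (if m \<le> k \<and> k < 2*m then coeff P (D - m + 1 + (k - m)) else 0)"
  proof -
    have "coeff (\<Sum>i<m. monom (coeff P (D - m + 1 + i)) (m + i)) k
       = (\<Sum>i<m. if i = k - m \<and> m \<le> k then coeff P (D - m + 1 + i) else 0)"
      unfolding coeff_sum coeff_monom by (intro sum.cong) auto
    also have "\<dots> = (if m \<le> k \<and> k < 2*m then coeff P (D - m + 1 + (k - m)) else 0)"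
      by (cases "m \<le> k") (auto simp: sum.delta' cong: if_cong)
    finally show ?thesis .
  qed
  have low: "coeff (\<Sum>i<m. monom (coeff P i) i) k = (if k < m then coeff P k else 0)"
    by (simp add: coeff_sum coeff_monom)
  have "sym_trunc D m P = (\<Sum>i<m. monom (coeff P i) i) + (\<Sum>i<m. monom (coeff P (D - m + 1 + i)) (m + i))"
    using assms by (simp add: sym_trunc_def)
  then show ?thesis
    by (simp only: coeff_add low high) auto
qed

lemma cf_of_nat: "cf n P (int i) = (if i \<le> n then coeff P i else 0)"
  by (simp add: cf_def)

text \<open>The index i is an integer, matching the indices in \<open>sylv_row\<close>; negative values are harmless
since \<open>cf\<close> vanishes outside \<open>[0, n]\<close>.\<close>

definition cf_agree_at_ends :: "nat \<Rightarrow> 'a::zero poly \<Rightarrow> nat \<Rightarrow> 'a poly \<Rightarrow> nat \<Rightarrow> bool" where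
  "cf_agree_at_ends n P n' Q m \<longleftrightarrow>
     (\<forall>i < int m. cf n P i = cf n' Q i \<and> cf n P (int n - i) = cf n' Q (int n' - i))"

lemma cf_agree_at_ends_sym_trunc:
  assumes "0 < l" "l \<le> d div 2"
  shows "cf_agree_at_ends d P (2*l - 1) (sym_trunc d l P) l"
proof -
  have "cf d P i = cf (2*l - 1) (sym_trunc d l P) i \<and>
        cf d P (int d - i) = cf (2*l - 1) (sym_trunc d l P) (int (2*l - 1) - i)"
    if "i < int l" for i
  proof (cases "i < 0")
    case False
    define t where "t = nat i"
    have t: "i = int t" "t < l"
      using False that unfolding t_def by auto
    have shift: "int d - i = int (d - t)" "int (2*l - 1) - i = int (2*l - 1 - t)"
      using assms t by auto
    have bottom: "cf d P (int t) = cf (2*l - 1) (sym_trunc d l P) (int t)"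
    proof -
      have "t \<le> d" "t \<le> 2*l - 1"
        using assms t by auto
      then show ?thesis
        using assms t by (simp add: cf_of_nat coeff_sym_trunc)
    qed
    have top: "cf d P (int (d - t)) = cf (2*l - 1) (sym_trunc d l P) (int (2*l - 1 - t))"
    proof -
      have "\<not> 2*l - 1 - t < l" "2*l - 1 - t < 2*l" "d - l + 1 + (2*l - 1 - t - l) = d - t"
        using assms t by auto
      then show ?thesis
        using assms by (simp only: cf_of_nat) (simp add: coeff_sym_trunc)
    qed
    show ?thesis
      unfolding shift by (simp only: t(1) bottom top)
  qed (simp add: cf_def)
  then show ?thesis
    unfolding cf_agree_at_ends_def by blast
qed

text \<open>The hypothesis on k and k' places the middle column \<open>cf n P (j - r + k)\<close> within the
agreeing block at the bottom or at the top.\<close>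

lemma sylv_row_cong:
  assumes ends: "cf_agree_at_ends n P n' Q m" and "j \<le> m" "0 < r" "r \<le> j"
    and mid: "k + j \<le> m \<and> k' = k \<or> int n - int k < int m \<and> int n - int k = int n' - int k'"
  shows "sylv_row n P j k r c = sylv_row n' Q j k' r c"
proof -
  have low: "cf n P i = cf n' Q i" and high: "cf n P (int n - i) = cf n' Q (int n' - i)"
    if "i < int m" for i
    using ends that unfolding cf_agree_at_ends_def by auto
  consider "c < j" | "c = j" | "j < c" by linarith
  then show ?thesis
  proof cases
    case 1
    then show ?thesis
      using low[of "int c - int r"] assms(2) by (simp add: sylv_row_def)
  next
    case 2
    from mid have "cf n P (int j - int r + int k) = cf n' Q (int j - int r + int k')"
    proof
      assume "k + j \<le> m \<and> k' = k"
      then show ?thesis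
        using low[of "int j - int r + int k"] assms(3,4) by simp
    next
      assume h: "int n - int k < int m \<and> int n - int k = int n' - int k'"
      define s where "s = int n - int k - (int j - int r)"
      have args: "int n - s = int j - int r + int k" "int n' - s = int j - int r + int k'"
        using h unfolding s_def by simp_all
      have "cf n P (int n - s) = cf n' Q (int n' - s)"
        using high h assms(4) unfolding s_def by simp
      then show ?thesis
        unfolding args .
    qed
    with 2 show ?thesis
      by (simp add: sylv_row_def)
  next
    case 3
    then show ?thesis
      using high[of "int r - int (c - j)"] assms(2,4) by (simp add: sylv_row_def algebra_simps)
  qed
qed

lemma Sylv_cong:
  assumes "cf_agree_at_ends n A n' A' m" "cf_agree_at_ends n B n' B' m" "j \<le> m"
    and "k + j \<le> m \<and> k' = k \<or> int n - int k < int m \<and> int n - int k = int n' - int k'"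
  shows "Sylv n A B j k = Sylv n' A' B' j k'"
proof -
  have rows: "sylv_row n A j k r c = sylv_row n' A' j k' r c"
             "sylv_row n B j k r c = sylv_row n' B' j k' r c" if "0 < r" "r \<le> j" for r c
    using sylv_row_cong[OF assms(1) assms(3) that assms(4)]
      sylv_row_cong[OF assms(2) assms(3) that assms(4)] .
  show ?thesis
    unfolding Sylv_def by (rule eq_matI) (auto simp: rows)
qed

lemma coeff_sym_subres:
  assumes "1 \<le> j"
  shows "coeff (sym_subres n A B (int j)) k = (if k \<le> n - j then det (Sylv n A B j k) else 0)"
  using assms by (simp add: sym_subres_def coeff_sum coeff_monom)

lemma coeff_sym_subres_cong:
  assumes "cf_agree_at_ends n A n' A' m" "cf_agree_at_ends n B n' B' m" "1 \<le> j" "j \<le> m"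
    and "k + j \<le> m \<and> k' = k \<or> int n - int k < int m \<and> int n - int k = int n' - int k'"
    and "k \<le> n - j \<longleftrightarrow> k' \<le> n' - j"
  shows "coeff (sym_subres n A B (int j)) k = coeff (sym_subres n' A' B' (int j)) k'"
  using Sylv_cong[OF assms(1,2,4,5)] assms(3,6) by (simp add: coeff_sym_subres)

lemma sym_trunc_cong:
  assumes "0 < m" "m \<le> D div 2" "m \<le> D' div 2"
    and "\<And>i. i < m \<Longrightarrow> coeff P i = coeff Q i"
    and "\<And>i. i < m \<Longrightarrow> coeff P (D - m + 1 + i) = coeff Q (D' - m + 1 + i)"
  shows "sym_trunc D m P = sym_trunc D' m Q"
  using assms by (simp add: sym_trunc_def)

lemma coeff_sym_subres_sym_trunc_low:
  assumes "1 \<le> j" "j < l" "l \<le> d div 2" "k < l - j"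
  shows "coeff (sym_subres d A B (int j)) k
       = coeff (sym_subres (2*l - 1) (sym_trunc d l A) (sym_trunc d l B) (int j)) k"
  using assms by (intro coeff_sym_subres_cong[where m = l] cf_agree_at_ends_sym_trunc) auto

lemma coeff_sym_subres_sym_trunc_high:
  assumes "1 \<le> j" "j < l" "l \<le> d div 2" "i < l - j"
  shows "coeff (sym_subres d A B (int j)) (d - l + 1 + i)
       = coeff (sym_subres (2*l - 1) (sym_trunc d l A) (sym_trunc d l B) (int j)) (l + i)"
  using assms by (intro coeff_sym_subres_cong[where m = l] cf_agree_at_ends_sym_trunc) auto

theorem lemma8:
  fixes D :: "complex set" and A B :: "complex poly" and d l j :: nat
  assumes "is_subring_C D"
    and "\<forall>i. coeff A i \<in> D" and "\<forall>i. coeff B i \<in> D"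
    and "degree A = d" and "degree B = d"
    and "val A = 0" and "val B = 0"
    and "1 \<le> l" and "l \<le> d div 2"
    and "1 \<le> j" and "j < l"
  shows "sym_trunc (d - j) (l - j) (sym_subres d A B (int j))
           = sym_trunc (2*l - 1 - j) (l - j)
               (sym_subres (2*l - 1) (sym_trunc d l A) (sym_trunc d l B) (int j))
       \<and> poly (sym_subres d A B (int j)) 0
           = poly (sym_subres (2*l - 1) (sym_trunc d l A) (sym_trunc d l B) (int j)) 0
       \<and> coeff (sym_subres d A B (int j)) (d - j)
           = coeff (sym_subres (2*l - 1) (sym_trunc d l A) (sym_trunc d l B) (int j)) (2*l - 1 - j)"
proof -
  define S where "S = sym_subres d A B (int j)"
  define T where "T = sym_subres (2*l - 1) (sym_trunc d l A) (sym_trunc d l B) (int j)"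
  note low = coeff_sym_subres_sym_trunc_low[OF assms(10,11,9), of _ A B, folded S_def T_def]
  note high = coeff_sym_subres_sym_trunc_high[OF assms(10,11,9), of _ A B, folded S_def T_def]
  have trunc: "sym_trunc (d - j) (l - j) S = sym_trunc (2*l - 1 - j) (l - j) T"
    using assms(8-11) low high by (intro sym_trunc_cong) (auto simp: Suc_diff_le)
  have const: "poly S 0 = poly T 0"
    using low[of 0] assms(11) by (simp add: poly_0_coeff_0)
  have top_index: "d - l + 1 + (l - j - 1) = d - j" "l + (l - j - 1) = 2*l - 1 - j"
    using assms(9-11) by auto
  have top: "coeff S (d - j) = coeff T (2*l - 1 - j)"
    using high[of "l - j - 1"] assms(11) unfolding top_index by simp
  show ?thesis
    using trunc const top unfolding S_def T_def by blast
qed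

end
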